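(* Let $\mathfrak S=(\mathcal S,\mathcal U,T_{\mathfrak s})$ be a controlled Markov process, $\mathcal P=\langle B_1,\dots,B_\ell\rangle$ a partition of $\mathcal S$ into measurable sets, $s^0\in\mathcal S$ an initial state and $\rho$ a stationary control policy. Suppose that for every finite path $(s^0,\dots,s^n)\in\mathcal S^{n+1}$ of $\mathfrak S$ starting at $s^0$ and every odd $i\in\{1,\dots,\ell\}$, $$s^n\in B_i\implies P_{s^n}^{\rho}\Big(\mathfrak S\models\lozenge\big(\square\neg B_i\vee\textstyle\bigvee_{j\text{ even},\,j\in\{i+1,\dots,\ell\}}B_j\big)\Big)=1.$$ Then $P_{s^0}^{\rho}(\mathfrak S\models\mathit{Parity}(\mathcal P))=1$.
   Context: CMP: $\mathfrak S=(\mathcal S,\mathcal U,T_{\mathfrak s})$ with $\mathcal S$ a Borel space, $\mathcal U$ a finite input set, $T_{\mathfrak s}(\cdot\mid s,u)$ a probability measure on the Borel sets of $\mathcal S$. A stationary policy is a universally measurable $\rho:\mathcal S\to\mathcal U$; $P_s^\rho$ is the induced probability measure on infinite paths $(s^0,s^1,\dots)$ with $s^0=s$ and $s^{k+1}\sim T_{\mathfrak s}(\cdot\mid s^k,\rho(s^k))$. A finite path of length $n+1$ is any sequence $(s^0,\dots,s^n)$ of states. Temporal operators have LTL semantics on infinite paths: $\lozenge\phi$ means $\phi$ holds at some suffix; $\square\neg B_i$ means $B_i$ is never visited from that point on; a set $B_j$ as a formula holds at a position if the current state is in $B_j$. $\mathit{Parity}(\mathcal P)$ holds on a path iff for every odd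 $i$, if $B_i$ is visited infinitely often then $B_j$ is visited infinitely often for some even $j\in\{i+1,\dots,\ell\}$. *)

theory Defs
  imports "HOL-Probability.Probability"
begin

text \<open>Controlled Markov process: state space a Borel space (a Polish type with its Borel
sigma-algebra), finite input type, transition kernel T s u, a probability measure on the
Borel sets, Borel measurable in s for each fixed input.\<close>

definition is_cmp :: "('s::polish_space \<Rightarrow> 'u::finite \<Rightarrow> 's measure) \<Rightarrow> bool" where
  "is_cmp T \<longleftrightarrow> (\<forall>u. (\<lambda>s. T s u) \<in> borel \<rightarrow>\<^sub>M prob_algebra borel)"

definition universally_measurable :: "('s::topological_space \<Rightarrow> 'u) \<Rightarrow> bool" where
  "universally_measurable f \<longleftrightarrow>
     (\<forall>\<mu>. sets \<mu> = sets borel \<and> prob_space \<mu> \<longrightarrow> f \<in> measurable (completion \<mu>) (count_space UNIV))"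

text \<open>Probability of the cylinder  s^0 in A 0, ..., s^n in A n  for the chain started at s
under the stationary policy rho.\<close>
fun path_cyl :: "('s \<Rightarrow> 'u \<Rightarrow> 's measure) \<Rightarrow> ('s \<Rightarrow> 'u) \<Rightarrow> nat \<Rightarrow> (nat \<Rightarrow> 's set) \<Rightarrow> 's \<Rightarrow> ennreal" where
  "path_cyl T \<rho> 0 A s = indicator (A 0) s"
| "path_cyl T \<rho> (Suc n) A s =
     indicator (A 0) s * (\<integral>\<^sup>+ t. path_cyl T \<rho> n (\<lambda>k. A (Suc k)) t \<partial>(T s (\<rho> s)))"

definition is_path_measure ::
  "('s::topological_space \<Rightarrow> 'u \<Rightarrow> 's measure) \<Rightarrow> ('s \<Rightarrow> 'u) \<Rightarrow> ('s \<Rightarrow> 's stream measure) \<Rightarrow> bool" where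
  "is_path_measure T \<rho> P \<longleftrightarrow>
     (\<forall>s. sets (P s) = sets (stream_space borel) \<and> prob_space (P s) \<and>
        (\<forall>n A. (\<forall>k. A k \<in> sets borel) \<longrightarrow>
           emeasure (P s) {\<omega> \<in> space (P s). \<forall>k\<le>n. \<omega> !! k \<in> A k} = path_cyl T \<rho> n A s))"

definition is_meas_partition :: "nat \<Rightarrow> (nat \<Rightarrow> 's::topological_space set) \<Rightarrow> bool" where
  "is_meas_partition l B \<longleftrightarrow>
     (\<forall>i\<in>{1..l}. B i \<in> sets borel) \<and>
     (\<Union>i\<in>{1..l}. B i) = UNIV \<and>
     (\<forall>i\<in>{1..l}. \<forall>j\<in>{1..l}. i \<noteq> j \<longrightarrow> B i \<inter> B j = {})"

definition ev_escape :: "nat \<Rightarrow> (nat \<Rightarrow> 's set) \<Rightarrow> nat \<Rightarrow> 's stream \<Rightarrow> bool" where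
  "ev_escape l B i \<omega> \<longleftrightarrow>
     (\<exists>k. (\<forall>m\<ge>k. \<omega> !! m \<notin> B i) \<or> (\<exists>j. even j \<and> i < j \<and> j \<le> l \<and> \<omega> !! k \<in> B j))"

definition parity :: "nat \<Rightarrow> (nat \<Rightarrow> 's set) \<Rightarrow> 's stream \<Rightarrow> bool" where
  "parity l B \<omega> \<longleftrightarrow>
     (\<forall>i. odd i \<and> 1 \<le> i \<and> i \<le> l \<longrightarrow> (\<exists>\<^sub>\<infinity>n. \<omega> !! n \<in> B i) \<longrightarrow>
        (\<exists>j. even j \<and> i < j \<and> j \<le> l \<and> (\<exists>\<^sub>\<infinity>n. \<omega> !! n \<in> B j)))"

end

theory Submission
  imports Defs
begin

(* Fix an odd index i. By the Markov property, the shifted path measure distr (P s) stl is the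
   mixture of the measures P t over the successor distribution T s (\<rho> s); hence an event that holds
   almost surely from every start state also holds almost surely after any fixed number of steps.
   Applied to "if the current state lies in B i, then eventually B i is left for good or an even
   B j with j > i is visited", this shows that almost surely every visit to B i is followed by such
   an escape. A path visiting B i infinitely often but the larger even sets only finitely often
   would have a visit to B i after its last even visit, and that visit cannot be followed by an
   escape.

   Since \<rho> is only universally measurable, s \<mapsto> T s (\<rho> s) is measurable only with respect
   to completions of Borel probability measures; so the measurability of s \<mapsto> P s needed for the
   Markov property is proved for every such completion, via the cylinder sets that generate the
   stream sigma-algebra. *)

definition universally_borel_measurable :: "('s::topological_space \<Rightarrow> ennreal) \<Rightarrow> bool" where
  "universally_borel_measurable f \<longleftrightarrow>
     (\<forall>\<mu>. sets \<mu> = sets borel \<and> prob_space \<mu> \<longrightarrow> f \<in> borel_measurable (completion \<mu>))"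

lemma measurable_policy_kernel_completion:
  fixes T :: "'s::polish_space \<Rightarrow> 'u::finite \<Rightarrow> 's measure"
  assumes "is_cmp T" "universally_measurable \<rho>" "sets \<mu> = sets borel" "prob_space \<mu>"
  shows "(\<lambda>s. T s (\<rho> s)) \<in> completion \<mu> \<rightarrow>\<^sub>M prob_algebra borel"
proof (rule measurable_compose_countable'[where I=UNIV and g=\<rho> and f="\<lambda>u s. T s u"])
  fix u :: 'u
  have "(\<lambda>s. T s u) \<in> \<mu> \<rightarrow>\<^sub>M prob_algebra borel"
    using assms(1,3) by (simp add: is_cmp_def cong: measurable_cong_sets)
  then show "(\<lambda>s. T s u) \<in> completion \<mu> \<rightarrow>\<^sub>M prob_algebra borel"
    by (rule measurable_completion)
next
  show "\<rho> \<in> completion \<mu> \<rightarrow>\<^sub>M count_space UNIV"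
    using assms(2-4) by (simp add: universally_measurable_def)
qed simp

lemma borel_measurable_completion_AE_cong:
  fixes f g :: "'a \<Rightarrow> 'b::topological_space"
  assumes g: "g \<in> borel_measurable (completion M)" and ae: "AE x in completion M. f x = g x"
  shows "f \<in> borel_measurable (completion M)"
proof (rule measurableI)
  fix A :: "'b set" assume "A \<in> sets borel"
  then show "f -` A \<inter> space (completion M) \<in> sets (completion M)"
    using ae by (intro completion.in_sets_AE[OF _ measurable_sets[OF g]]) (auto elim!: eventually_mono)
qed simp

lemma universally_borel_measurable_nn_integral_kernel:
  fixes T :: "'s::polish_space \<Rightarrow> 'u::finite \<Rightarrow> 's measure"
  assumes cmp: "is_cmp T" and \<rho>: "universally_measurable \<rho>" and f: "universally_borel_measurable f"
  shows "universally_borel_measurable (\<lambda>s. \<integral>\<^sup>+t. f t \<partial>T s (\<rho> s))"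
  unfolding universally_borel_measurable_def
proof (intro allI impI, elim conjE)
  fix \<mu> :: "'s measure" assume sets_\<mu>: "sets \<mu> = sets borel" and "prob_space \<mu>"
  then have K: "(\<lambda>s. T s (\<rho> s)) \<in> completion \<mu> \<rightarrow>\<^sub>M prob_algebra borel"
    and \<mu>: "completion \<mu> \<in> space (prob_algebra (completion \<mu>))"
    using measurable_policy_kernel_completion[OF cmp \<rho>]
    by (auto simp: space_prob_algebra prob_space.prob_space_completion)
  define \<nu> where "\<nu> = completion \<mu> \<bind> (\<lambda>s. T s (\<rho> s))"
  have sets_\<nu>: "sets \<nu> = sets borel" and "prob_space \<nu>"
    unfolding \<nu>_def by (rule sets_bind'[OF \<mu> K], rule prob_space_bind'[OF \<mu> K])
  then have "f \<in> borel_measurable (completion \<nu>)"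
    using f by (simp add: universally_borel_measurable_def)
  then obtain g where g: "g \<in> borel_measurable \<nu>" and "AE t in \<nu>. f t = g t"
    using completion_ex_borel_measurable by blast
  have g_integral: "(\<lambda>s. \<integral>\<^sup>+t. g t \<partial>T s (\<rho> s)) \<in> borel_measurable (completion \<mu>)"
    using g sets_\<nu> by (intro measurable_compose[OF measurable_prob_algebraD[OF K]]
        nn_integral_measurable_subprob_algebra) (simp cong: measurable_cong_sets)
  from \<open>AE t in \<nu>. f t = g t\<close> obtain N where N: "N \<in> null_sets \<nu>" and f_eq_g: "\<And>t. t \<notin> N \<Longrightarrow> f t = g t"
    using sets_eq_imp_space_eq[OF sets_\<nu>] by (auto elim!: AE_E)
  have "AE t in \<nu>. t \<notin> N"
    using N by (rule AE_not_in)
  then have "AE s in completion \<mu>. AE t in T s (\<rho> s). t \<notin> N"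
    using N sets_\<nu> unfolding \<nu>_def
    by (subst (asm) AE_bind[OF measurable_prob_algebraD[OF K]]) (auto simp: null_sets_def)
  then have "AE s in completion \<mu>. AE t in T s (\<rho> s). f t = g t"
    by (auto elim!: eventually_mono intro: f_eq_g)
  then have "AE s in completion \<mu>. (\<integral>\<^sup>+t. f t \<partial>T s (\<rho> s)) = (\<integral>\<^sup>+t. g t \<partial>T s (\<rho> s))"
    by eventually_elim (rule nn_integral_cong_AE)
  with g_integral show "(\<lambda>s. \<integral>\<^sup>+t. f t \<partial>T s (\<rho> s)) \<in> borel_measurable (completion \<mu>)"
    by (rule borel_measurable_completion_AE_cong)
qed

lemma universally_borel_measurable_path_cyl:
  fixes T :: "'s::polish_space \<Rightarrow> 'u::finite \<Rightarrow> 's measure"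
  assumes cmp: "is_cmp T" and \<rho>: "universally_measurable \<rho>" and A: "\<forall>k. A k \<in> sets borel"
  shows "universally_borel_measurable (path_cyl T \<rho> n A)"
  using A
proof (induction n arbitrary: A)
  case 0
  then show ?case
    by (auto simp: universally_borel_measurable_def intro!: borel_measurable_indicator)
next
  case (Suc n)
  then have "universally_borel_measurable
      (\<lambda>s. \<integral>\<^sup>+t. path_cyl T \<rho> n (\<lambda>k. A (Suc k)) t \<partial>T s (\<rho> s))"
    by (intro universally_borel_measurable_nn_integral_kernel[OF cmp \<rho>]) simp
  with Suc.prems show ?case
    unfolding universally_borel_measurable_def path_cyl.simps
    by (auto intro!: borel_measurable_times_ennreal borel_measurable_indicator)
qed

definition stream_cylinder :: "nat \<Rightarrow> (nat \<Rightarrow> 'a set) \<Rightarrow> 'a stream set" where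
  "stream_cylinder n A = {\<omega>. \<forall>k\<le>n. \<omega> !! k \<in> A k}"

lemma stream_cylinder_Suc_stl:
  "stream_cylinder (Suc n) (case_nat UNIV A) = {\<omega>. stl \<omega> \<in> stream_cylinder n A}"
  unfolding stream_cylinder_def less_Suc_eq_le[symmetric] All_less_Suc2 by simp

lemma sets_stream_cylinder:
  assumes "\<forall>k. A k \<in> sets M" "space M = UNIV"
  shows "stream_cylinder n A \<in> sets (stream_space M)"
proof -
  have "Measurable.pred (stream_space M) (\<lambda>\<omega>. \<forall>k\<le>n. \<omega> !! k \<in> A k)"
    using assms(1) by measurable
  then show ?thesis
    using assms(2) by (simp add: stream_cylinder_def pred_def space_stream_space)
qed

definition borel_cylinders :: "'a::topological_space stream set set" where
  "borel_cylinders = {stream_cylinder n A |n A. \<forall>k. A k \<in> sets borel}"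

lemma UNIV_in_borel_cylinders: "UNIV \<in> borel_cylinders"
proof -
  have "stream_cylinder 0 (\<lambda>_. UNIV) \<in> borel_cylinders"
    unfolding borel_cylinders_def by (intro CollectI exI[of _ 0] exI[of _ "\<lambda>_. UNIV"]) simp
  then show ?thesis
    by (simp add: stream_cylinder_def)
qed

lemma Int_stable_borel_cylinders: "Int_stable (borel_cylinders :: 'a::topological_space stream set set)"
proof (rule Int_stableI)
  fix X Y :: "'a stream set" assume "X \<in> borel_cylinders" "Y \<in> borel_cylinders"
  then obtain n m A C where XY: "X = stream_cylinder n A" "Y = stream_cylinder m C"
    and AC: "\<forall>k. A k \<in> sets borel" "\<forall>k. C k \<in> sets borel"
    unfolding borel_cylinders_def by blast
  let ?D = "\<lambda>k. (if k \<le> n then A k else UNIV) \<inter> (if k \<le> m then C k else UNIV)"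
  have "X \<inter> Y = stream_cylinder (max n m) ?D"
    unfolding XY stream_cylinder_def by (auto simp: le_max_iff_disj)
  moreover have "\<forall>k. ?D k \<in> sets borel"
    using AC by simp
  ultimately show "X \<inter> Y \<in> borel_cylinders"
    unfolding borel_cylinders_def by blast
qed

lemma sets_stream_space_borel_cylinders:
  "sets (stream_space (borel :: 'a::topological_space measure)) = sigma_sets UNIV borel_cylinders"
proof
  let ?N = "sigma UNIV (borel_cylinders :: 'a stream set set)"
  have "sets (stream_space (borel :: 'a measure)) \<subseteq> sets ?N"
  proof (rule sets_stream_space_in_sets)
    fix i
    show "(\<lambda>\<omega>. \<omega> !! i) \<in> ?N \<rightarrow>\<^sub>M borel"
    proof (rule measurableI)
      fix X :: "'a set" assume "X \<in> sets borel"
      then have "stream_cylinder i (\<lambda>k. if k = i then X else UNIV) \<in> borel_cylinders"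
        unfolding borel_cylinders_def by force
      moreover have "stream_cylinder i (\<lambda>k. if k = i then X else UNIV) = (\<lambda>\<omega>. \<omega> !! i) -` X"
        by (auto simp: stream_cylinder_def)
      ultimately show "(\<lambda>\<omega>. \<omega> !! i) -` X \<inter> space ?N \<in> sets ?N"
        by (auto intro: sigma_sets.Basic)
    qed auto
  qed auto
  then show "sets (stream_space borel) \<subseteq> sigma_sets UNIV (borel_cylinders :: 'a stream set set)"
    by simp
  have "borel_cylinders \<subseteq> sets (stream_space (borel :: 'a measure))"
    by (auto simp: borel_cylinders_def intro: sets_stream_cylinder)
  from sets.sigma_sets_subset[OF this]
  show "sigma_sets UNIV borel_cylinders \<subseteq> sets (stream_space (borel :: 'a measure))"
    by (simp add: space_stream_space)
qed

locale controlled_markov_chain =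
  fixes T :: "'s::polish_space \<Rightarrow> 'u::finite \<Rightarrow> 's measure"
    and \<rho> :: "'s \<Rightarrow> 'u"
    and P :: "'s \<Rightarrow> 's stream measure"
  assumes cmp: "is_cmp T"
    and policy: "universally_measurable \<rho>"
    and path_measure: "is_path_measure T \<rho> P"
begin

lemma sets_P [measurable_cong]: "sets (P s) = sets (stream_space borel)"
  and prob_space_P: "prob_space (P s)"
  using path_measure by (auto simp: is_path_measure_def)

lemma space_P: "space (P s) = UNIV"
  using sets_eq_imp_space_eq[OF sets_P] by (simp add: space_stream_space)

lemma emeasure_P_stream_cylinder:
  "\<forall>k. A k \<in> sets borel \<Longrightarrow> emeasure (P s) (stream_cylinder n A) = path_cyl T \<rho> n A s"
  using path_measure by (simp add: is_path_measure_def stream_cylinder_def space_P)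

lemma prob_space_kernel: "prob_space (T s u)" and sets_kernel: "sets (T s u) = sets borel"
proof -
  have "T s u \<in> space (prob_algebra borel)"
    using cmp measurable_space[of "\<lambda>s. T s u" borel "prob_algebra borel" s]
    by (simp add: is_cmp_def)
  then show "prob_space (T s u)" "sets (T s u) = sets borel"
    by (auto simp: space_prob_algebra)
qed

lemma measurable_P_completion:
  assumes "sets \<mu> = sets borel" "prob_space \<mu>"
  shows "P \<in> completion \<mu> \<rightarrow>\<^sub>M prob_algebra (stream_space borel)"
proof (rule measurable_prob_algebra_generated[OF sets_stream_space_borel_cylinders
      Int_stable_borel_cylinders])
  fix X :: "'s stream set" assume "X \<in> borel_cylinders"
  then obtain n A where X: "X = stream_cylinder n A" and A: "\<forall>k. A k \<in> sets borel"
    unfolding borel_cylinders_def by blast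
  then have "universally_borel_measurable (path_cyl T \<rho> n A)"
    using universally_borel_measurable_path_cyl[OF cmp policy] by blast
  then show "(\<lambda>s. emeasure (P s) X) \<in> borel_measurable (completion \<mu>)"
    using assms X A by (simp add: emeasure_P_stream_cylinder universally_borel_measurable_def)
qed (auto simp: prob_space_P sets_P)

lemma distr_P_stl: "distr (P s) (stream_space borel) stl = completion (T s (\<rho> s)) \<bind> P"
proof (rule measure_eqI_generator_eq[OF Int_stable_borel_cylinders, where \<Omega>=UNIV and A="\<lambda>_. UNIV"])
  let ?K = "T s (\<rho> s)"
  have K: "completion ?K \<in> space (prob_algebra (completion ?K))"
    by (simp add: space_prob_algebra prob_space.prob_space_completion prob_space_kernel)
  have P: "P \<in> completion ?K \<rightarrow>\<^sub>M prob_algebra (stream_space borel)"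
    by (rule measurable_P_completion[OF sets_kernel prob_space_kernel])
  show "sets (completion ?K \<bind> P) = sigma_sets UNIV borel_cylinders"
    using sets_bind'[OF K P] sets_stream_space_borel_cylinders by simp
  show "sets (distr (P s) (stream_space borel) stl) = sigma_sets UNIV borel_cylinders"
    using sets_stream_space_borel_cylinders by simp
  show "range (\<lambda>_. UNIV) \<subseteq> borel_cylinders"
    using UNIV_in_borel_cylinders by auto
  have distr_prob: "prob_space (distr (P s) (stream_space borel) stl)"
    by (simp add: prob_space.prob_space_distr prob_space_P)
  show "emeasure (distr (P s) (stream_space borel) stl) UNIV \<noteq> \<infinity>"
    using prob_space.emeasure_space_1[OF distr_prob] by (simp add: space_stream_space)
  fix X :: "'s stream set" assume "X \<in> borel_cylinders"
  then obtain n A where X: "X = stream_cylinder n A" and A: "\<forall>k. A k \<in> sets borel"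
    unfolding borel_cylinders_def by blast
  have A': "\<forall>k. case_nat UNIV A k \<in> sets borel"
    using A by (simp split: nat.split)
  have "emeasure (distr (P s) (stream_space borel) stl) X = emeasure (P s) (stream_cylinder (Suc n) (case_nat UNIV A))"
    using X A by (simp add: emeasure_distr sets_stream_cylinder stream_cylinder_Suc_stl vimage_def space_P)
  also have "\<dots> = \<integral>\<^sup>+t. path_cyl T \<rho> n A t \<partial>?K"
    using A' by (simp add: emeasure_P_stream_cylinder)
  also have "\<dots> = \<integral>\<^sup>+t. emeasure (P t) X \<partial>completion ?K"
    using X A by (simp add: emeasure_P_stream_cylinder nn_integral_completion)
  also have "\<dots> = emeasure (completion ?K \<bind> P) X"
    using X A by (simp add: emeasure_bind_prob_algebra[OF K P] sets_stream_cylinder)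
  finally show "emeasure (distr (P s) (stream_space borel) stl) X = emeasure (completion ?K \<bind> P) X" .
qed simp_all

lemma AE_P_stl:
  assumes [measurable]: "Measurable.pred (stream_space borel) Q"
    and "\<And>t. AE \<omega> in P t. Q \<omega>"
  shows "AE \<omega> in P s. Q (stl \<omega>)"
proof -
  have K: "P \<in> completion (T s (\<rho> s)) \<rightarrow>\<^sub>M subprob_algebra (stream_space borel)"
    using measurable_P_completion[OF sets_kernel prob_space_kernel] by (rule measurable_prob_algebraD)
  have "AE \<omega> in distr (P s) (stream_space borel) stl. Q \<omega>"
    unfolding distr_P_stl using assms(2) by (simp add: AE_bind[OF K])
  then show ?thesis
    by (subst (asm) AE_distr_iff) simp_all
qed

lemma AE_P_sdrop:
  assumes "Measurable.pred (stream_space borel) Q" and "\<And>t. AE \<omega> in P t. Q \<omega>"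
  shows "AE \<omega> in P s. Q (sdrop n \<omega>)"
proof (induction n arbitrary: s)
  case 0
  then show ?case using assms(2) by simp
next
  case (Suc n)
  have "Measurable.pred (stream_space borel) (\<lambda>\<omega>. Q (sdrop n \<omega>))"
    using assms(1) by measurable
  from AE_P_stl[OF this Suc.IH] show ?case
    by simp
qed

lemma AE_P_shd: "AE \<omega> in P s. \<omega> !! 0 = s"
proof -
  have [measurable]: "- {s} \<in> sets borel"
    by (simp add: borel_open)
  have "emeasure (P s) (stream_cylinder 0 (\<lambda>_. - {s})) = 0"
    by (simp add: emeasure_P_stream_cylinder)
  moreover have "stream_cylinder 0 (\<lambda>_. - {s}) \<in> sets (P s)"
    using sets_stream_cylinder[of "\<lambda>_. - {s}" borel 0] by (simp add: sets_P)
  ultimately show ?thesis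
    by (subst AE_iff_measurable) (auto simp: stream_cylinder_def space_P)
qed

lemma AE_P_after_visits:
  assumes [measurable]: "A \<in> sets borel" "Measurable.pred (stream_space borel) E"
    and "\<And>t. t \<in> A \<Longrightarrow> AE \<omega> in P t. E \<omega>"
  shows "AE \<omega> in P s. \<forall>n. \<omega> !! n \<in> A \<longrightarrow> E (sdrop n \<omega>)"
proof -
  have "AE \<omega> in P t. \<omega> !! 0 \<in> A \<longrightarrow> E \<omega>" for t
  proof (cases "t \<in> A")
    case True
    from assms(3)[OF True] show ?thesis by (rule eventually_mono) simp
  next
    case False
    with AE_P_shd[of t] show ?thesis by (auto elim: eventually_mono)
  qed
  then have "AE \<omega> in P s. sdrop n \<omega> !! 0 \<in> A \<longrightarrow> E (sdrop n \<omega>)" for n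
    by (intro AE_P_sdrop) measurable
  then show ?thesis
    by (simp add: AE_all_countable)
qed

end

lemma parity_if_escape_after_visits:
  assumes "\<And>i n. odd i \<Longrightarrow> 1 \<le> i \<Longrightarrow> i \<le> l \<Longrightarrow> \<omega> !! n \<in> B i \<Longrightarrow> ev_escape l B i (sdrop n \<omega>)"
  shows "parity l B \<omega>"
  unfolding parity_def
proof (intro allI impI)
  fix i assume i: "odd i \<and> 1 \<le> i \<and> i \<le> l" and inf: "\<exists>\<^sub>\<infinity>n. \<omega> !! n \<in> B i"
  show "\<exists>j. even j \<and> i < j \<and> j \<le> l \<and> (\<exists>\<^sub>\<infinity>n. \<omega> !! n \<in> B j)"
  proof (rule ccontr)
    assume "\<not> ?thesis"
    then have "\<forall>\<^sub>\<infinity>n. \<forall>j\<in>{j. even j \<and> i < j \<and> j \<le> l}. \<omega> !! n \<notin> B j"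
      by (intro eventually_ball_finite) (auto simp: not_frequently)
    then obtain m where m: "\<And>n j. m < n \<Longrightarrow> even j \<Longrightarrow> i < j \<Longrightarrow> j \<le> l \<Longrightarrow> \<omega> !! n \<notin> B j"
      unfolding MOST_nat by auto
    from inf obtain n where n: "m < n" "\<omega> !! n \<in> B i"
      unfolding INFM_nat by blast
    with assms i obtain k where "(\<forall>k'\<ge>k. \<omega> !! (n + k') \<notin> B i) \<or>
        (\<exists>j. even j \<and> i < j \<and> j \<le> l \<and> \<omega> !! (n + k) \<in> B j)"
      unfolding ev_escape_def sdrop_snth by blast
    then show False
    proof
      assume never: "\<forall>k'\<ge>k. \<omega> !! (n + k') \<notin> B i"
      from inf obtain n' where "n + k < n'" "\<omega> !! n' \<in> B i"
        unfolding INFM_nat by blast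
      then have "k \<le> n' - n" "\<omega> !! (n + (n' - n)) \<in> B i"
        by simp_all
      with never show False by blast
    next
      assume "\<exists>j. even j \<and> i < j \<and> j \<le> l \<and> \<omega> !! (n + k) \<in> B j"
      with m[of "n + k"] n(1) show False by auto
    qed
  qed
qed

lemma measurable_ev_escape:
  assumes "\<forall>j\<in>{1..l}. B j \<in> sets M" "i \<in> {1..l}"
  shows "Measurable.pred (stream_space M) (ev_escape l B i)"
proof -
  have "ev_escape l B i = (\<lambda>\<omega>. \<exists>k. (\<forall>m\<ge>k. \<omega> !! m \<notin> B i) \<or> (\<exists>j\<in>{j. even j \<and> i < j \<and> j \<le> l}. \<omega> !! k \<in> B j))"
    by (auto simp: ev_escape_def fun_eq_iff)
  also have "Measurable.pred (stream_space M) \<dots>"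
    using assms by measurable
  finally show ?thesis .
qed

lemma measurable_parity:
  assumes "\<forall>j\<in>{1..l}. B j \<in> sets M"
  shows "Measurable.pred (stream_space M) (parity l B)"
proof -
  have "parity l B = (\<lambda>\<omega>. \<forall>i\<in>{1..l}. odd i \<longrightarrow> (\<forall>m. \<exists>n>m. \<omega> !! n \<in> B i) \<longrightarrow>
      (\<exists>j\<in>{j. even j \<and> i < j \<and> j \<le> l}. \<forall>m. \<exists>n>m. \<omega> !! n \<in> B j))"
    by (auto simp: parity_def INFM_nat fun_eq_iff)
  also have "Measurable.pred (stream_space M) \<dots>"
    using assms by measurable
  finally show ?thesis .
qed

theorem lemma2:
  fixes T :: "'s::polish_space \<Rightarrow> 'u::finite \<Rightarrow> 's measure"
    and \<rho> :: "'s \<Rightarrow> 'u"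
    and P :: "'s \<Rightarrow> 's stream measure"
    and l :: nat and B :: "nat \<Rightarrow> 's set" and s0 :: 's
  assumes "is_cmp T"
    and "universally_measurable \<rho>"
    and "is_path_measure T \<rho> P"
    and "is_meas_partition l B"
    and "\<forall>path :: 's list. path \<noteq> [] \<and> hd path = s0 \<longrightarrow>
           (\<forall>i. odd i \<and> 1 \<le> i \<and> i \<le> l \<longrightarrow> last path \<in> B i \<longrightarrow>
              measure (P (last path)) {\<omega> \<in> space (P (last path)). ev_escape l B i \<omega>} = 1)"
  shows "measure (P s0) {\<omega> \<in> space (P s0). parity l B \<omega>} = 1"
proof -
  interpret controlled_markov_chain T \<rho> P
    using assms(1-3) by unfold_locales
  have B: "\<forall>j\<in>{1..l}. B j \<in> sets borel"
    using assms(4) by (simp add: is_meas_partition_def)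
  have escape: "AE \<omega> in P s. ev_escape l B i \<omega>" if "odd i" "i \<in> {1..l}" "s \<in> B i" for i s
  proof -
    have [measurable]: "Measurable.pred (stream_space borel) (ev_escape l B i)"
      using B that(2) by (rule measurable_ev_escape)
    have "measure (P s) {\<omega> \<in> space (P s). ev_escape l B i \<omega>} = 1"
      using assms(5)[rule_format, of "[s0, s]" i] that by simp
    then show ?thesis
      by (subst (asm) prob_space.prob_Collect_eq_1[OF prob_space_P]) measurable
  qed
  have "AE \<omega> in P s0. \<forall>i\<in>{i\<in>{1..l}. odd i}. \<forall>n. \<omega> !! n \<in> B i \<longrightarrow> ev_escape l B i (sdrop n \<omega>)"
    using B by (intro AE_ball_countable' AE_P_after_visits measurable_ev_escape escape) auto
  then have "AE \<omega> in P s0. parity l B \<omega>"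
    by eventually_elim (auto intro: parity_if_escape_after_visits)
  moreover have "{\<omega> \<in> space (P s0). parity l B \<omega>} \<in> sets (P s0)"
    using measurable_parity[OF B] by measurable
  ultimately show ?thesis
    by (subst prob_space.prob_Collect_eq_1[OF prob_space_P])
qed

end
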